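(* Let $n\ge1$, $X=\{1,\dots,n\}$, $\mathcal{A}$ the algebra of all functions $X\to\mathbb{R}$ with pointwise operations, $\sigma:X\to X$ a bijection and $\tilde{\sigma}(f)=f\circ\sigma^{-1}$. The centralizer of $\mathcal{A}$ in the skew-Laurent ring $\mathcal{A}[x,x^{-1};\tilde{\sigma}]$ is $$C(\mathcal{A})=\Big\{\sum_{n\in\mathbb{Z}} f_nx^n : f_n\in\mathcal{A},\ f_n=0\text{ for all but finitely many } n,\ f_n=0\text{ on } Sep^n(X)\text{ for all } n\Big\}.$$
   Context: The skew-Laurent ring $\mathcal{A}[x,x^{-1};\tilde{\sigma}]$ is the ring containing $\mathcal{A}$ as a subring and an invertible element $x$ such that it is a free left $\mathcal{A}$-module with basis $\{x^n:n\in\mathbb{Z}\}$ and $xf=\tilde{\sigma}(f)x$, $x^{-1}f=\tilde{\sigma}^{-1}(f)x^{-1}$ for all $f\in\mathcal{A}$. For an integer $n$, $Sep^n(X)=\{p\in X:\sigma^n(p)\neq p\}$ (so $Sep^0(X)=\emptyset$). *)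

theory Defs
  imports Complex_Main
begin

text \<open>X = {1..N}; the algebra A of real functions on X is represented by
  functions nat => real vanishing outside X.\<close>

definition Alg :: "nat \<Rightarrow> (nat \<Rightarrow> real) set" where
  "Alg N = {f. \<forall>i. i \<notin> {1..N} \<longrightarrow> f i = 0}"

definition spow :: "(nat \<Rightarrow> nat) \<Rightarrow> nat \<Rightarrow> int \<Rightarrow> nat \<Rightarrow> nat" where
  "spow \<sigma> N m p = (if m \<ge> 0 then (\<sigma> ^^ nat m) p
                     else (inv_into {1..N} \<sigma> ^^ nat (- m)) p)"

definition stilde_pow :: "(nat \<Rightarrow> nat) \<Rightarrow> nat \<Rightarrow> int \<Rightarrow> (nat \<Rightarrow> real) \<Rightarrow> (nat \<Rightarrow> real)" where
  "stilde_pow \<sigma> N m g = (\<lambda>p. if p \<in> {1..N} then g (spow \<sigma> N (- m) p) else 0)"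

text \<open>Elements of the skew-Laurent ring: finitely supported coefficient families
  (a m is the coefficient of x^m).\<close>
definition LR :: "nat \<Rightarrow> (int \<Rightarrow> nat \<Rightarrow> real) set" where
  "LR N = {a. finite {m. a m \<noteq> (\<lambda>_. 0)} \<and> (\<forall>m. a m \<in> Alg N)}"

text \<open>Multiplication: (a_m x^m)(b_j x^j) = a_m tilde-sigma^m(b_j) x^(m+j).\<close>
definition lmult :: "(nat \<Rightarrow> nat) \<Rightarrow> nat \<Rightarrow> (int \<Rightarrow> nat \<Rightarrow> real) \<Rightarrow> (int \<Rightarrow> nat \<Rightarrow> real)
                     \<Rightarrow> (int \<Rightarrow> nat \<Rightarrow> real)" where
  "lmult \<sigma> N a b = (\<lambda>k p. \<Sum>m\<in>{m. a m \<noteq> (\<lambda>_. 0)}. a m p * stilde_pow \<sigma> N m (b (k - m)) p)"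

definition lconst :: "(nat \<Rightarrow> real) \<Rightarrow> (int \<Rightarrow> nat \<Rightarrow> real)" where
  "lconst f = (\<lambda>k. if k = 0 then f else (\<lambda>_. 0))"

definition centralizer :: "(nat \<Rightarrow> nat) \<Rightarrow> nat \<Rightarrow> (int \<Rightarrow> nat \<Rightarrow> real) set" where
  "centralizer \<sigma> N = {a \<in> LR N. \<forall>f \<in> Alg N. lmult \<sigma> N a (lconst f) = lmult \<sigma> N (lconst f) a}"

definition Sep :: "(nat \<Rightarrow> nat) \<Rightarrow> nat \<Rightarrow> int \<Rightarrow> nat set" where
  "Sep \<sigma> N m = {p \<in> {1..N}. spow \<sigma> N m p \<noteq> p}"

end

theory Submission
  imports Defs
begin

text \<open>Multiplying by f x^0 on the right turns the coefficient a_k into a_k (f o sigma^(-k)),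
  on the left into f a_k. So a commutes with all of A iff a_k(p) (f(sigma^(-k) p) - f p) = 0
  for all f, k and p; testing with indicator functions of points shows that this means
  a_k(p) = 0 whenever sigma^(-k) p, equivalently sigma^k p, differs from p.\<close>

lemma funpow_left_inverse:
  assumes "f ` A \<subseteq> A" and "\<And>x. x \<in> A \<Longrightarrow> g (f x) = x" and "x \<in> A"
  shows "(g ^^ n) ((f ^^ n) x) = x"
  using assms(3)
proof (induction n arbitrary: x)
  case 0
  then show ?case by simp
next
  case (Suc n)
  have "(f ^^ n) x \<in> A"
    using Suc.prems assms(1) by (induction n) auto
  then have "(g ^^ Suc n) ((f ^^ Suc n) x) = (g ^^ n) ((f ^^ n) x)"
    using assms(2) by (simp only: funpow_Suc_right[of n g] funpow.simps(2)[of n f] comp_apply)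
  with Suc show ?case by simp
qed

lemma funpow_inv_into_fixed_iff:
  assumes "bij_betw f A A" and "x \<in> A"
  shows "(inv_into A f ^^ n) x = x \<longleftrightarrow> (f ^^ n) x = x"
proof -
  have "(inv_into A f ^^ n) ((f ^^ n) x) = x"
    by (rule funpow_left_inverse)
      (use assms bij_betw_inv_into_left[OF assms(1)] in \<open>auto simp: bij_betw_def\<close>)
  moreover have "(f ^^ n) ((inv_into A f ^^ n) x) = x"
    by (rule funpow_left_inverse)
      (use assms bij_betw_inv_into_right[OF assms(1)] bij_betwE[OF bij_betw_inv_into[OF assms(1)]]
        in \<open>auto simp: bij_betw_def\<close>)
  ultimately show ?thesis by metis
qed

lemma spow_uminus_fixed_iff:
  assumes "bij_betw \<sigma> {1..N} {1..N}" and "p \<in> {1..N}"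
  shows "spow \<sigma> N (- k) p = p \<longleftrightarrow> spow \<sigma> N k p = p"
  using funpow_inv_into_fixed_iff[OF assms] unfolding spow_def
  by (cases "k = 0") auto

lemma lmult_lconst_right:
  assumes "a \<in> LR N"
  shows "lmult \<sigma> N a (lconst f) k p = a k p * stilde_pow \<sigma> N k f p"
proof -
  have "finite {m. a m \<noteq> (\<lambda>_. 0)}"
    using assms by (simp add: LR_def)
  moreover have "lmult \<sigma> N a (lconst f) k p =
      (\<Sum>m\<in>{m. a m \<noteq> (\<lambda>_. 0)}. if m = k then a k p * stilde_pow \<sigma> N k f p else 0)"
    unfolding lmult_def lconst_def by (rule sum.cong) (auto simp: stilde_pow_def)
  ultimately show ?thesis
    by (auto simp: sum.delta)
qed

lemma lmult_lconst_left:
  "lmult \<sigma> N (lconst f) a k p = f p * stilde_pow \<sigma> N 0 (a k) p"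
proof (cases "f = (\<lambda>_. 0)")
  case True
  then show ?thesis by (simp add: lmult_def lconst_def)
next
  case False
  then have "{m. lconst f m \<noteq> (\<lambda>_. 0)} = {0}"
    by (auto simp: lconst_def)
  then show ?thesis by (simp add: lmult_def lconst_def)
qed

lemma lmult_lconst_commute_iff:
  assumes "a \<in> LR N"
  shows "lmult \<sigma> N a (lconst f) k p = lmult \<sigma> N (lconst f) a k p \<longleftrightarrow>
    (p \<in> {1..N} \<longrightarrow> a k p * f (spow \<sigma> N (- k) p) = f p * a k p)"
proof -
  have "a k p = 0" if "p \<notin> {1..N}"
    using assms that by (auto simp: LR_def Alg_def)
  then show ?thesis
    by (auto simp: lmult_lconst_right[OF assms] lmult_lconst_left stilde_pow_def spow_def)
qed

lemma commutes_with_Alg_iff_vanishes_on_Sep: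
  assumes \<sigma>: "bij_betw \<sigma> {1..N} {1..N}" and a: "a \<in> LR N"
  shows "(\<forall>f \<in> Alg N. lmult \<sigma> N a (lconst f) = lmult \<sigma> N (lconst f) a) \<longleftrightarrow>
    (\<forall>m. \<forall>p \<in> Sep \<sigma> N m. a m p = 0)"
proof
  assume comm: "\<forall>f \<in> Alg N. lmult \<sigma> N a (lconst f) = lmult \<sigma> N (lconst f) a"
  show "\<forall>m. \<forall>p \<in> Sep \<sigma> N m. a m p = 0"
  proof (intro allI ballI)
    fix m p
    assume "p \<in> Sep \<sigma> N m"
    then have p: "p \<in> {1..N}" and moved: "spow \<sigma> N (- m) p \<noteq> p"
      using spow_uminus_fixed_iff[OF \<sigma>] by (auto simp: Sep_def)
    define \<delta> where "\<delta> = (\<lambda>q. if q = p then 1 else 0 :: real)"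
    have "\<delta> \<in> Alg N"
      using p by (auto simp: \<delta>_def Alg_def)
    then have "a m p * \<delta> (spow \<sigma> N (- m) p) = \<delta> p * a m p"
      using comm p lmult_lconst_commute_iff[OF a] by metis
    then show "a m p = 0"
      using moved by (simp add: \<delta>_def)
  qed
next
  assume vanish: "\<forall>m. \<forall>p \<in> Sep \<sigma> N m. a m p = 0"
  show "\<forall>f \<in> Alg N. lmult \<sigma> N a (lconst f) = lmult \<sigma> N (lconst f) a"
  proof (intro ballI ext)
    fix f k p
    have "a k p * f (spow \<sigma> N (- k) p) = f p * a k p" if p: "p \<in> {1..N}"
    proof (cases "spow \<sigma> N k p = p")
      case True
      then have "spow \<sigma> N (- k) p = p"
        using spow_uminus_fixed_iff[OF \<sigma> p] by blast
      then show ?thesis by simp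
    next
      case False
      then show ?thesis
        using vanish p by (simp add: Sep_def)
    qed
    then show "lmult \<sigma> N a (lconst f) k p = lmult \<sigma> N (lconst f) a k p"
      using lmult_lconst_commute_iff[OF a] by blast
  qed
qed

theorem theorem12:
  fixes N :: nat and \<sigma> :: "nat \<Rightarrow> nat"
  assumes "N \<ge> 1" and "bij_betw \<sigma> {1..N} {1..N}"
  shows "centralizer \<sigma> N = {a \<in> LR N. \<forall>m. \<forall>p \<in> Sep \<sigma> N m. a m p = 0}"
  using commutes_with_Alg_iff_vanishes_on_Sep[OF assms(2)]
  unfolding centralizer_def by blast

end
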